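(* In the setting described in the context, let $0<h<h_\circ$ and $j\in\{1,\dots,d\}$. Then there is a constant $C$, independent of $v$ and $h$, such that \[(\partial_{x_j}\mathbf H\Phi_v^h(x))^2\le C\,\mathbf H\Phi_v^h(x)\quad\text{for all }x\in B_{R_\circ-1}.\]
   Context: $\mathbf Hf(x)=|\det(\partial_i\partial_jf(x))_{i,j}|$. $B_r$ is the open ball of radius $r$ centered at $0$ in $\mathbb R^d$, $2\le d\le4$. Let $\phi:\mathbb R^d\to\mathbb R$ coincide on $[-1,1]^d$ with an analytic convex function of finite type defined on $[-2,2]^d$ and vanish outside $[-1,1]^d$; finite type means there are an integer $k\ge2$ and $m,M>0$ with $|\partial^\alpha\phi(x)|\le M$ for $|\alpha|\le 2k+5$ and $\sum_{j=2}^k\frac1{j!}|(u\cdot\nabla)^j\phi(x)|\ge m$ for all $x\in[-1,1]^d$ and unit vectors $u$. For $v\in\mathbb R^d$ with $-v\in\nabla\phi(B_{1/4})$, let $\omega_v\in B_{1/4}$ be the unique point with $\nabla\phi(\omega_v)=-v$ and $\Phi_v(x)=\phi(x+\omega_v)+v\cdot x-\phi(\omega_v)$. There is $c_\phi>0$ with $(c_\phi|x|)^k\le\Phi_v(x)$ on $B_{1/2}$ for all such $v$; fix $0<h_\circ\le(c_\phi/4)^k$. For $0<h<h_\circ$ let $\mathcal B_v^h=\{x\in B_{1/2}:\Phi_v(x)<h/2\}$, let $T_v^h$ be an invertible affine map of $\mathbb R^d$ with $B_1\subset(T_v^h)^{-1}\mathcal B_v^h\subset B_d$, and set $\Phi_v^h(x)=h^{-1}\Phi_v(T_v^hx)$.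 Standing assumption: $h_\circ$ is small enough that every $\Phi_v^h$ is defined, convex and of finite type on a ball $B_{R_\circ}$ with $R_\circ\ge100d$. *)

theory Defs
  imports "HOL-Analysis.Analysis"
begin

text \<open>Points of R^d are vectors real^'n with CARD('n) = d.\<close>

definition cube :: "real \<Rightarrow> (real^'n) set" where
  "cube r = {x. \<forall>i. \<bar>x $ i\<bar> \<le> r}"

definition partial :: "'n \<Rightarrow> (real^'n \<Rightarrow> real) \<Rightarrow> real^'n \<Rightarrow> real" where
  "partial i f x = deriv (\<lambda>t. f (x + t *\<^sub>R axis i 1)) 0"

text \<open>Iterated partial derivative; a list of indices of length n represents a multi-index of order n.\<close>
fun iter_partial :: "'n list \<Rightarrow> (real^'n \<Rightarrow> real) \<Rightarrow> real^'n \<Rightarrow> real" where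
  "iter_partial [] f = f"
| "iter_partial (i # is) f = partial i (iter_partial is f)"

definition udot_grad :: "real^'n \<Rightarrow> (real^'n \<Rightarrow> real) \<Rightarrow> real^'n \<Rightarrow> real" where
  "udot_grad u f = (\<lambda>x. \<Sum>i\<in>UNIV. u $ i * partial i f x)"

definition grad :: "(real^'n \<Rightarrow> real) \<Rightarrow> real^'n \<Rightarrow> real^'n" where
  "grad f x = (\<chi> i. partial i f x)"

definition finite_type_on :: "(real^'n) set \<Rightarrow> (real^'n \<Rightarrow> real) \<Rightarrow> nat \<Rightarrow> real \<Rightarrow> real \<Rightarrow> bool" where
  "finite_type_on S f k m M \<longleftrightarrow> 2 \<le> k \<and> m > 0 \<and> M > 0 \<and>
     (\<forall>x\<in>S. \<forall>is. length is \<le> 2 * k + 5 \<longrightarrow> \<bar>iter_partial is f x\<bar> \<le> M) \<and>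
     (\<forall>x\<in>S. \<forall>u. norm u = 1 \<longrightarrow>
        (\<Sum>j=2..k. \<bar>((udot_grad u) ^^ j) f x\<bar> / fact j) \<ge> m)"

definition real_analytic_at :: "(real^'n \<Rightarrow> real) \<Rightarrow> real^'n \<Rightarrow> bool" where
  "real_analytic_at f a \<longleftrightarrow> (\<exists>r>0. \<exists>c :: ('n \<Rightarrow> nat) \<Rightarrow> real.
     \<forall>x\<in>ball a r. ((\<lambda>\<alpha>. c \<alpha> * (\<Prod>i\<in>UNIV. (x $ i - a $ i) ^ \<alpha> i)) has_sum f x) UNIV)"

definition hessdet :: "(real^'n \<Rightarrow> real) \<Rightarrow> real^'n \<Rightarrow> real" where
  "hessdet f x = \<bar>det (\<chi> i j. partial i (partial j f) x)\<bar>"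

definition admissible :: "(real^'n \<Rightarrow> real) \<Rightarrow> real^'n \<Rightarrow> bool" where
  "admissible g v \<longleftrightarrow> (\<exists>w\<in>ball 0 (1/4). grad g w = - v)"

definition omega :: "(real^'n \<Rightarrow> real) \<Rightarrow> real^'n \<Rightarrow> real^'n" where
  "omega g v = (THE w. w \<in> ball 0 (1/4) \<and> grad g w = - v)"

definition Phi :: "(real^'n \<Rightarrow> real) \<Rightarrow> real^'n \<Rightarrow> real^'n \<Rightarrow> real" where
  "Phi g v x = g (x + omega g v) + v \<bullet> x - g (omega g v)"

definition sublevel :: "(real^'n \<Rightarrow> real) \<Rightarrow> real^'n \<Rightarrow> real \<Rightarrow> (real^'n) set" where
  "sublevel g v h = {x \<in> ball 0 (1/2). Phi g v x < h / 2}"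

definition invertible_affine :: "(real^'n \<Rightarrow> real^'n) \<Rightarrow> bool" where
  "invertible_affine T \<longleftrightarrow> (\<exists>A b. linear A \<and> bij A \<and> T = (\<lambda>x. A x + b))"

definition Phih :: "(real^'n \<Rightarrow> real) \<Rightarrow> real^'n \<Rightarrow> real \<Rightarrow> (real^'n \<Rightarrow> real^'n) \<Rightarrow> real^'n \<Rightarrow> real" where
  "Phih g v h T x = Phi g v (T x) / h"

end

theory Submission
  imports Defs
begin

(* Along the line t \<mapsto> x + t e_j the function f(t) = det D\<^sup>2\<Phi>(x + t e_j) is nonnegative,
   because \<Phi> is convex, and f, f', f'' are bounded by a constant depending only on the
   finite-type bound for the derivatives of \<Phi> of order at most four, because the determinant
   is a polynomial in the second derivatives. Glaeser's inequality f'(0)\<^sup>2 \<le> 2 sup |f''| f(0)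
   for nonnegative functions then gives the claim. Analyticity of \<phi> is needed only to know that
   \<Phi> is smooth, so that the partial derivatives occurring in the finite-type condition are
   genuine derivatives. *)

section \<open>Smooth functions\<close>

definition dir_deriv :: "'a::real_normed_vector \<Rightarrow> ('a \<Rightarrow> real) \<Rightarrow> 'a \<Rightarrow> real" where
  "dir_deriv u f x = deriv (\<lambda>t. f (x + t *\<^sub>R u)) 0"

text \<open>Since \<open>dir_deriv\<close> is built from \<open>deriv\<close>, this is what makes iterated partial
  derivatives genuine derivatives.\<close>
coinductive smooth_on :: "'a::real_normed_vector set \<Rightarrow> ('a \<Rightarrow> real) \<Rightarrow> bool" for S where
  smooth_onI: "(\<And>y. y \<in> S \<Longrightarrow> f differentiable (at y)) \<Longrightarrow> (\<And>u. smooth_on S (dir_deriv u f))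
    \<Longrightarrow> smooth_on S f"

lemma smooth_on_invariantI:
  assumes "X f"
    and "\<And>f. X f \<Longrightarrow> (\<forall>y\<in>S. f differentiable (at y)) \<and>
                      (\<forall>u. X (dir_deriv u f) \<or> smooth_on S (dir_deriv u f))"
  shows "smooth_on S f"
  using assms(1)
proof (coinduction arbitrary: f rule: smooth_on.coinduct)
  case (smooth_on f)
  then show ?case using assms(2)[of f] by blast
qed

lemma has_real_derivative_along_line:
  assumes "(f has_derivative D) (at (x + t *\<^sub>R u))"
  shows "((\<lambda>s. f (x + s *\<^sub>R u)) has_real_derivative D u) (at t)"
proof -
  have "((\<lambda>s. x + s *\<^sub>R u) has_derivative (\<lambda>s. s *\<^sub>R u)) (at t)"
    by (auto intro!: derivative_eq_intros)
  from has_derivative_compose[OF this assms]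
  have "((\<lambda>s. f (x + s *\<^sub>R u)) has_derivative (\<lambda>s. D (s *\<^sub>R u))) (at t)"
    by (simp add: o_def)
  moreover have "(\<lambda>s. D (s *\<^sub>R u)) = (*) (D u)"
    using has_derivative_linear[OF assms] by (auto simp: linear_scale)
  ultimately show ?thesis
    by (simp add: has_field_derivative_def)
qed

lemma dir_deriv_eq:
  assumes "(f has_derivative D) (at y)"
  shows "dir_deriv u f y = D u"
  unfolding dir_deriv_def
  by (rule DERIV_imp_deriv) (use has_real_derivative_along_line[of f D y 0 u] assms in simp)

lemma dir_deriv_cong:
  assumes "open S" "y \<in> S" "\<And>z. z \<in> S \<Longrightarrow> f z = g z"
  shows "dir_deriv u f y = dir_deriv u g y"
proof -
  have "open ((\<lambda>t::real. y + t *\<^sub>R u) -` S)"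
    by (rule open_vimage[OF assms(1)]) (intro continuous_intros)
  then have "eventually (\<lambda>t. y + t *\<^sub>R u \<in> S) (nhds 0)"
    using assms(2) eventually_nhds_in_open by fastforce
  then have "eventually (\<lambda>t. f (y + t *\<^sub>R u) = g (y + t *\<^sub>R u)) (nhds 0)"
    by eventually_elim (use assms in auto)
  then show ?thesis
    unfolding dir_deriv_def by (intro deriv_cong_ev) auto
qed

lemma smooth_on_differentiable: "smooth_on S f \<Longrightarrow> y \<in> S \<Longrightarrow> f differentiable (at y)"
  by (erule smooth_on.cases) auto

lemma smooth_on_dir_deriv: "smooth_on S f \<Longrightarrow> smooth_on S (dir_deriv u f)"
  by (erule smooth_on.cases) auto

lemma smooth_on_has_derivative:
  assumes "smooth_on S f" "y \<in> S"
  shows "(f has_derivative (\<lambda>u. dir_deriv u f y)) (at y)"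
proof -
  obtain D where D: "(f has_derivative D) (at y)"
    using smooth_on_differentiable[OF assms] by (auto simp: differentiable_def)
  moreover have "D = (\<lambda>u. dir_deriv u f y)"
    using dir_deriv_eq[OF D] by auto
  ultimately show ?thesis by simp
qed

lemma smooth_on_has_real_derivative_along_line:
  assumes "smooth_on S f" "x + t *\<^sub>R u \<in> S"
  shows "((\<lambda>s. f (x + s *\<^sub>R u)) has_real_derivative dir_deriv u f (x + t *\<^sub>R u)) (at t)"
  using has_real_derivative_along_line[OF smooth_on_has_derivative[OF assms]] .

lemma smooth_on_locally:
  assumes "\<forall>y\<in>S. \<exists>N. open N \<and> y \<in> N \<and> smooth_on N f"
  shows "smooth_on S f"
proof (rule smooth_on_invariantI[of "\<lambda>f. \<forall>y\<in>S. \<exists>N. open N \<and> y \<in> N \<and> smooth_on N f"])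
  fix f assume "\<forall>y\<in>S. \<exists>N. open N \<and> y \<in> N \<and> smooth_on N f"
  then show "(\<forall>y\<in>S. f differentiable (at y)) \<and>
      (\<forall>u. (\<forall>y\<in>S. \<exists>N. open N \<and> y \<in> N \<and> smooth_on N (dir_deriv u f)) \<or> smooth_on S (dir_deriv u f))"
    by (meson smooth_on_dir_deriv smooth_on_differentiable)
qed (use assms in blast)

lemma has_derivative_affine_comp:
  fixes A :: "'a::euclidean_space \<Rightarrow> 'b::euclidean_space" and l :: "'a \<Rightarrow> real"
  assumes K: "(K has_derivative K') (at (A y + b))" and A: "linear A" and l: "linear l"
  shows "((\<lambda>y. c * K (A y + b) + l y + e) has_derivative (\<lambda>h. c * K' (A h) + l h)) (at y)"
proof -
  have "((\<lambda>y. A y + b) has_derivative A) (at y)"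
    using A by (auto intro!: derivative_eq_intros linear_imp_has_derivative)
  from has_derivative_compose[OF this K]
  have "((\<lambda>y. K (A y + b)) has_derivative (\<lambda>h. K' (A h))) (at y)"
    by (simp add: o_def)
  then show ?thesis
    using l by (auto intro!: derivative_eq_intros linear_imp_has_derivative)
qed

lemma smooth_on_affine_comp:
  fixes A :: "'a::euclidean_space \<Rightarrow> 'b::euclidean_space" and l :: "'a \<Rightarrow> real"
  assumes K: "smooth_on U K" and A: "linear A" and l: "linear l" and S: "open S"
    and AS: "\<And>y. y \<in> S \<Longrightarrow> A y + b \<in> U"
  shows "smooth_on S (\<lambda>y. c * K (A y + b) + l y + e)"
  \<comment> \<open>The class is closed under \<open>dir_deriv u\<close>: the derivative is \<open>c (dir_deriv (A u) K)(A y + b) + l u\<close>.\<close>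
proof (rule smooth_on_invariantI[of "\<lambda>G. \<exists>K c l e. smooth_on U K \<and> linear l \<and>
           (\<forall>y\<in>S. G y = c * K (A y + b) + l y + e)"])
  show "\<exists>K' c' l' e'. smooth_on U K' \<and> linear l' \<and>
      (\<forall>y\<in>S. c * K (A y + b) + l y + e = c' * K' (A y + b) + l' y + e')"
    using K l by blast
next
  fix G assume "\<exists>K c l e. smooth_on U K \<and> linear l \<and> (\<forall>y\<in>S. G y = c * K (A y + b) + l y + e)"
  then obtain K c l e where K: "smooth_on U K" and l: "linear l"
    and G: "\<And>y. y \<in> S \<Longrightarrow> G y = c * K (A y + b) + l y + e" by blast
  have G': "(G has_derivative (\<lambda>h. c * dir_deriv (A h) K (A y + b) + l h)) (at y)"
    if y: "y \<in> S" for y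
  proof (rule has_derivative_transform_within_open[OF _ S y])
    show "((\<lambda>y. c * K (A y + b) + l y + e) has_derivative
        (\<lambda>h. c * dir_deriv (A h) K (A y + b) + l h)) (at y)"
      by (rule has_derivative_affine_comp[OF smooth_on_has_derivative[OF K AS[OF y]] A l])
  qed (use G in auto)
  show "(\<forall>y\<in>S. G differentiable (at y)) \<and>
        (\<forall>u. (\<exists>K c l e. smooth_on U K \<and> linear l \<and>
                (\<forall>y\<in>S. dir_deriv u G y = c * K (A y + b) + l y + e))
          \<or> smooth_on S (dir_deriv u G))"
  proof (intro conjI allI ballI disjI1)
    show "G differentiable (at y)" if "y \<in> S" for y
      using G'[OF that] by (auto simp: differentiable_def)
    fix u
    show "\<exists>K c l e. smooth_on U K \<and> linear l \<and>
        (\<forall>y\<in>S. dir_deriv u G y = c * K (A y + b) + l y + e)"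
    proof (intro exI conjI ballI)
      show "smooth_on U (dir_deriv (A u) K)" using K by (rule smooth_on_dir_deriv)
      show "linear (\<lambda>y::'a. 0::real)" by (simp add: linear_zero)
      fix y assume "y \<in> S"
      show "dir_deriv u G y = c * dir_deriv (A u) K (A y + b) + 0 + l u"
        using dir_deriv_eq[OF G'[OF \<open>y \<in> S\<close>]] by simp
    qed
  qed
qed

lemma partial_eq_dir_deriv: "partial i f = dir_deriv (axis i 1) f"
  by (simp add: fun_eq_iff partial_def dir_deriv_def)

lemma smooth_on_iter_partial: "smooth_on S F \<Longrightarrow> smooth_on S (iter_partial is F)"
  by (induction "is") (auto simp: partial_eq_dir_deriv intro: smooth_on_dir_deriv)

lemma dir_deriv_eq_sum_partial:
  fixes f :: "real^'n \<Rightarrow> real"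
  assumes "smooth_on S f" "y \<in> S"
  shows "dir_deriv u f y = (\<Sum>i\<in>UNIV. u$i * partial i f y)"
proof -
  have L: "linear (\<lambda>u. dir_deriv u f y)"
    using smooth_on_has_derivative[OF assms] has_derivative_linear by blast
  have "dir_deriv u f y = dir_deriv (\<Sum>i\<in>UNIV. u$i *\<^sub>R axis i 1) f y"
    using basis_expansion[of u] by (simp add: scalar_mult_eq_scaleR)
  also have "\<dots> = (\<Sum>i\<in>UNIV. u$i * dir_deriv (axis i 1) f y)"
    using linear_sum[OF L, of "\<lambda>i. u$i *\<^sub>R axis i 1" UNIV] linear_scale[OF L] by (simp add: o_def)
  finally show ?thesis by (simp add: partial_eq_dir_deriv)
qed

section \<open>Real analytic functions are smooth\<close>

definition open_cube :: "real^'n \<Rightarrow> real \<Rightarrow> (real^'n) set" where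
  "open_cube a r = {x. \<forall>i. \<bar>x$i - a$i\<bar> < r}"

lemma open_cube_eq_box: "open_cube a r = box (a - (\<chi> i. r)) (a + (\<chi> i. r))"
proof -
  have "\<bar>x$i - a$i\<bar> < r \<longleftrightarrow> a$i - r < x$i \<and> x$i < a$i + r" for x i
    by auto
  then show ?thesis
    by (simp add: open_cube_def mem_box_cart set_eq_iff)
qed

lemma open_open_cube: "open (open_cube a r)"
  unfolding open_cube_eq_box by (rule open_box)

lemma convex_open_cube: "convex (open_cube a r)"
  by (simp add: open_cube_eq_box)

lemma open_cube_mono: "r \<le> s \<Longrightarrow> open_cube a r \<subseteq> open_cube a s"
  by (auto simp: open_cube_def intro: less_le_trans)

lemma open_cube_subset_ball:
  fixes a :: "real^'n"
  assumes "r > 0"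
  shows "open_cube a (r / real CARD('n)) \<subseteq> ball a r"
proof
  fix x assume x: "x \<in> open_cube a (r / real CARD('n))"
  have "dist a x \<le> (\<Sum>i\<in>UNIV. \<bar>(x - a)$i\<bar>)"
    using norm_le_l1_cart[of "x - a"] by (simp add: dist_norm norm_minus_commute)
  also have "\<dots> < (\<Sum>i\<in>(UNIV::'n set). r / real CARD('n))"
    using x by (intro sum_strict_mono) (auto simp: open_cube_def)
  finally show "x \<in> ball a r" by simp
qed

lemma open_cube_shrink:
  assumes "x \<in> open_cube a \<rho>"
  obtains s where "0 < s" "s < \<rho>" "x \<in> open_cube a s"
proof -
  define r where "r = Max ((\<lambda>i. \<bar>x$i - a$i\<bar>) ` UNIV)"
  have r: "\<bar>x$i - a$i\<bar> \<le> r" for i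
    unfolding r_def by (intro Max_ge) auto
  have "r \<in> (\<lambda>i. \<bar>x$i - a$i\<bar>) ` UNIV"
    unfolding r_def by (intro Max_in) auto
  then have "r < \<rho>" using assms by (auto simp: open_cube_def)
  moreover have "0 \<le> r" using r[of undefined] by linarith
  moreover have "\<bar>x$i - a$i\<bar> < (r + \<rho>) / 2" for i
    using r[of i] \<open>r < \<rho>\<close> by argo
  ultimately show ?thesis
    by (intro that[of "(r + \<rho>) / 2"]) (auto simp: open_cube_def)
qed

definition total_degree :: "('n::finite \<Rightarrow> nat) \<Rightarrow> nat" where
  "total_degree \<alpha> = (\<Sum>i\<in>UNIV. \<alpha> i)"

definition monomial :: "real^'n \<Rightarrow> ('n \<Rightarrow> nat) \<Rightarrow> real^'n \<Rightarrow> real" where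
  "monomial a \<alpha> x = (\<Prod>i\<in>UNIV. (x$i - a$i) ^ \<alpha> i)"

definition monomial_partial :: "'n \<Rightarrow> real^'n \<Rightarrow> ('n \<Rightarrow> nat) \<Rightarrow> real^'n \<Rightarrow> real" where
  "monomial_partial i a \<alpha> x =
     of_nat (\<alpha> i) * (x$i - a$i) ^ (\<alpha> i - 1) * (\<Prod>l\<in>UNIV-{i}. (x$l - a$l) ^ \<alpha> l)"

lemma has_derivative_monomial:
  fixes a x :: "real^'n"
  shows "((\<lambda>x. c * monomial a \<alpha> x) has_derivative (\<lambda>h. \<Sum>i\<in>UNIV. h$i * (c * monomial_partial i a \<alpha> x))) (at x)"
proof -
  have "((\<lambda>x::real^'n. x$i) has_derivative (\<lambda>h. h$i)) (at x)" for i
    by (rule bounded_linear_imp_has_derivative) (rule bounded_linear_vec_nth)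
  then have "((\<lambda>x::real^'n. (x$i - a$i) ^ \<alpha> i) has_derivative
      (\<lambda>h. real (\<alpha> i) * (x$i - a$i) ^ (\<alpha> i - 1) * h$i)) (at x)" for i
    by (auto intro!: derivative_eq_intros simp: mult_ac)
  then have "((\<lambda>x. \<Prod>i\<in>UNIV. (x$i - a$i) ^ \<alpha> i) has_derivative
     (\<lambda>h. \<Sum>i\<in>UNIV. (real (\<alpha> i) * (x$i - a$i) ^ (\<alpha> i - 1) * h$i) *
                     (\<Prod>j\<in>UNIV - {i}. (x$j - a$j) ^ \<alpha> j))) (at x)"
    by (rule has_derivative_prod)
  from has_derivative_mult_right[OF this, of c] show ?thesis
    by (simp add: monomial_def monomial_partial_def sum_distrib_left mult_ac)
qed

lemma monomial_corner: "monomial a \<alpha> (\<chi> i. a$i + s) = s ^ total_degree \<alpha>"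
  by (simp add: monomial_def total_degree_def power_sum)

lemma abs_monomial_partial_le:
  assumes "z \<in> open_cube a s"
  shows "\<bar>monomial_partial i a \<alpha> z\<bar> \<le> real (total_degree \<alpha>) * s ^ (total_degree \<alpha> - 1)"
proof -
  have z: "\<bar>z$l - a$l\<bar> \<le> s" for l
    using assms by (auto simp: open_cube_def less_imp_le)
  then have s: "0 \<le> s"
    using abs_ge_zero order_trans by blast
  show ?thesis
  proof (cases "\<alpha> i = 0")
    case True
    then show ?thesis using s by (simp add: monomial_partial_def)
  next
    case False
    have deg: "total_degree \<alpha> = \<alpha> i + (\<Sum>l\<in>UNIV-{i}. \<alpha> l)"
      by (simp add: total_degree_def sum.remove)
    have "\<bar>monomial_partial i a \<alpha> z\<bar> =
        real (\<alpha> i) * \<bar>z$i - a$i\<bar> ^ (\<alpha> i - 1) * (\<Prod>l\<in>UNIV-{i}. \<bar>z$l - a$l\<bar> ^ \<alpha> l)"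
      by (simp add: monomial_partial_def abs_mult abs_prod power_abs)
    also have "\<dots> \<le> real (total_degree \<alpha>) * s ^ (\<alpha> i - 1) * (\<Prod>l\<in>UNIV-{i}. s ^ \<alpha> l)"
    proof -
      have "real (\<alpha> i) \<le> real (total_degree \<alpha>)"
        using deg by (subst of_nat_le_iff) simp
      moreover have "\<bar>z$i - a$i\<bar> ^ (\<alpha> i - 1) \<le> s ^ (\<alpha> i - 1)"
        using z by (intro power_mono) auto
      moreover have "(\<Prod>l\<in>UNIV-{i}. \<bar>z$l - a$l\<bar> ^ \<alpha> l) \<le> (\<Prod>l\<in>UNIV-{i}. s ^ \<alpha> l)"
        using z by (intro prod_mono conjI power_mono) auto
      ultimately show ?thesis
        using s by (intro mult_mono) (auto intro!: prod_nonneg)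
    qed
    also have "\<dots> = real (total_degree \<alpha>) * s ^ (total_degree \<alpha> - 1)"
      using False by (simp add: deg power_sum[symmetric] power_add[symmetric])
    finally show ?thesis .
  qed
qed

lemma linear_times_power_dominated:
  fixes s s' :: real
  assumes "0 < s'" "s' < s"
  obtains K where "\<And>n. real n * s' ^ (n - 1) \<le> K * s ^ n"
proof -
  have "(\<lambda>n. of_nat n * (s'/s) ^ n) \<longlonglongrightarrow> 0"
    by (rule powser_times_n_limit_0) (use assms in auto)
  then have "bounded (range (\<lambda>n. real n * (s'/s) ^ n))"
    by (intro convergent_imp_bounded) (auto simp: convergent_def)
  then obtain Q where Q: "\<And>n. \<bar>real n * (s'/s) ^ n\<bar> \<le> Q"
    by (auto simp: bounded_iff)
  show ?thesis
  proof (rule that[of "Q / s'"])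
    fix n
    show "real n * s' ^ (n - 1) \<le> Q / s' * s ^ n"
    proof (cases n)
      case 0
      then show ?thesis using Q[of 0] assms by simp
    next
      case (Suc m)
      have "real n * s' ^ (n - 1) = real n * (s'/s) ^ n * s ^ n / s'"
        using assms Suc by (simp add: power_divide field_simps)
      also have "\<dots> \<le> Q * s ^ n / s'"
        using Q[of n] assms by (intro divide_right_mono mult_right_mono) auto
      finally show ?thesis by simp
    qed
  qed
qed

text \<open>Summability at the corner \<open>a + (s, \<dots>, s)\<close> of a larger cube gives a summable majorant
  for the termwise differentiated series.\<close>
lemma monomial_partial_majorant:
  fixes c :: "('n::finite \<Rightarrow> nat) \<Rightarrow> real" and a :: "real^'n"
  assumes hs: "\<And>x. x \<in> open_cube a \<rho> \<Longrightarrow> (\<lambda>\<alpha>. c \<alpha> * monomial a \<alpha> x) summable_on UNIV"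
    and s: "0 < s'" "s' < s" "s < \<rho>"
  obtains M where "M summable_on UNIV"
    "\<And>\<alpha> i z. z \<in> open_cube a s' \<Longrightarrow> \<bar>c \<alpha> * monomial_partial i a \<alpha> z\<bar> \<le> M \<alpha>"
proof -
  have "(\<chi> i. a$i + s) \<in> open_cube a \<rho>"
    using s by (auto simp: open_cube_def)
  from hs[OF this] have "(\<lambda>\<alpha>. c \<alpha> * s ^ total_degree \<alpha>) summable_on UNIV"
    by (simp add: monomial_corner)
  then have "(\<lambda>\<alpha>. norm (c \<alpha> * s ^ total_degree \<alpha>)) summable_on UNIV"
    by (rule summable_on_iff_abs_summable_on_real[THEN iffD1])
  then have "(\<lambda>\<alpha>. \<bar>c \<alpha>\<bar> * s ^ total_degree \<alpha>) summable_on UNIV"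
    using s by (simp add: abs_mult)
  then have sm: "(\<lambda>\<alpha>. K * (\<bar>c \<alpha>\<bar> * s ^ total_degree \<alpha>)) summable_on UNIV" for K
    by (rule summable_on_cmult_right)
  obtain K where K: "\<And>n. real n * s' ^ (n - 1) \<le> K * s ^ n"
    using linear_times_power_dominated[OF s(1,2)] by blast
  show ?thesis
  proof (rule that[OF sm[of K]])
    fix \<alpha> i z assume z: "z \<in> open_cube a s'"
    have "\<bar>c \<alpha> * monomial_partial i a \<alpha> z\<bar> = \<bar>c \<alpha>\<bar> * \<bar>monomial_partial i a \<alpha> z\<bar>"
      by (simp add: abs_mult)
    also have "\<dots> \<le> \<bar>c \<alpha>\<bar> * (real (total_degree \<alpha>) * s' ^ (total_degree \<alpha> - 1))"
      by (intro mult_left_mono abs_monomial_partial_le z) simp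
    also have "\<dots> \<le> \<bar>c \<alpha>\<bar> * (K * s ^ total_degree \<alpha>)"
      by (intro mult_left_mono K) simp
    finally show "\<bar>c \<alpha> * monomial_partial i a \<alpha> z\<bar> \<le> K * (\<bar>c \<alpha>\<bar> * s ^ total_degree \<alpha>)"
      by (simp add: mult_ac)
  qed
qed

lemma summable_on_by_majorant:
  fixes f :: "'a \<Rightarrow> real"
  assumes "M summable_on A" "\<And>x. x \<in> A \<Longrightarrow> \<bar>f x\<bar> \<le> M x"
  shows "f summable_on A"
proof -
  have "(\<lambda>x. norm (f x)) summable_on A"
    by (rule summable_on_comparison_test[OF assms(1)]) (use assms(2) in auto)
  then show ?thesis
    by (rule summable_on_iff_abs_summable_on_real[THEN iffD2])
qed

lemma infinite_UNIV_multi_index: "infinite (UNIV :: ('n::finite \<Rightarrow> nat) set)"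
proof -
  have "inj (\<lambda>k::nat. (\<lambda>_::'n. k))"
    by (auto simp: inj_def fun_eq_iff)
  then show ?thesis
    by (meson range_inj_infinite infinite_super subset_UNIV)
qed

lemma summable_on_imp_sums_from_nat_into:
  fixes f :: "'a::countable \<Rightarrow> real"
  assumes "infinite (UNIV :: 'a set)" "f summable_on UNIV"
  shows "(\<lambda>k. f (from_nat_into UNIV k)) sums (\<Sum>\<^sub>\<infinity>\<alpha>. f \<alpha>)"
proof -
  have "((\<lambda>k. f (from_nat_into UNIV k)) has_sum (\<Sum>\<^sub>\<infinity>\<alpha>. f \<alpha>)) UNIV"
    using assms by (subst has_sum_reindex_bij_betw[OF bij_betw_from_nat_into]) auto
  then show ?thesis by (rule has_sum_imp_sums)
qed

lemma uniform_limit_from_nat_into_partial_sums: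
  fixes f :: "'a::countable \<Rightarrow> 'b \<Rightarrow> real"
  assumes "infinite (UNIV :: 'a set)" "M summable_on UNIV"
    and M: "\<And>\<alpha> z. z \<in> S \<Longrightarrow> \<bar>f \<alpha> z\<bar> \<le> M \<alpha>"
  shows "uniform_limit S (\<lambda>n z. \<Sum>k<n. f (from_nat_into UNIV k) z) (\<lambda>z. \<Sum>\<^sub>\<infinity>\<alpha>. f \<alpha> z)
           sequentially"
proof -
  have "summable (\<lambda>k. M (from_nat_into UNIV k))"
    using summable_on_imp_sums_from_nat_into[OF assms(1,2)] sums_summable by blast
  then have "uniform_limit S (\<lambda>n z. \<Sum>k<n. f (from_nat_into UNIV k) z)
      (\<lambda>z. \<Sum>k. f (from_nat_into UNIV k) z) sequentially"
    by (rule Weierstrass_m_test[rotated]) (use M in auto)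
  moreover have "(\<Sum>k. f (from_nat_into UNIV k) z) = (\<Sum>\<^sub>\<infinity>\<alpha>. f \<alpha> z)" if "z \<in> S" for z
  proof -
    have "(\<lambda>\<alpha>. f \<alpha> z) summable_on UNIV"
      using M that by (intro summable_on_by_majorant[OF assms(2)]) auto
    from summable_on_imp_sums_from_nat_into[OF assms(1) this] show ?thesis
      by (simp add: sums_iff)
  qed
  ultimately show ?thesis
    using uniform_limit_cong'[where X = S and f = "\<lambda>n z. \<Sum>k<n. f (from_nat_into UNIV k) z"
        and g = "\<lambda>n z. \<Sum>k<n. f (from_nat_into UNIV k) z"
        and h = "\<lambda>z. \<Sum>k. f (from_nat_into UNIV k) z" and i = "\<lambda>z. \<Sum>\<^sub>\<infinity>\<alpha>. f \<alpha> z"]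
    by auto
qed

lemma abs_sum_components_le:
  fixes h :: "real^'n" and e :: real
  assumes "\<And>i. \<bar>d i\<bar> \<le> e"
  shows "\<bar>\<Sum>i\<in>UNIV. h$i * d i\<bar> \<le> CARD('n) * e * norm h"
proof -
  have "\<bar>\<Sum>i\<in>UNIV. h$i * d i\<bar> \<le> (\<Sum>i\<in>(UNIV::'n set). norm h * e)"
    using assms by (intro sum_abs[THEN order_trans] sum_mono)
      (auto simp: abs_mult intro!: mult_mono component_le_norm_cart)
  then show ?thesis
    by (simp add: mult_ac)
qed

lemma has_derivative_series_cart:
  fixes f :: "nat \<Rightarrow> real^'n \<Rightarrow> real"
  assumes S: "convex S" "open S" "x \<in> S"
    and f': "\<And>k z. z \<in> S \<Longrightarrow> (f k has_derivative (\<lambda>h. \<Sum>i\<in>UNIV. h$i * p k i z)) (at z)"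
    and p: "\<And>i. uniform_limit S (\<lambda>n z. \<Sum>k<n. p k i z) (G i) sequentially"
    and F: "\<And>z. z \<in> S \<Longrightarrow> (\<lambda>k. f k z) sums F z"
  shows "(F has_derivative (\<lambda>h. \<Sum>i\<in>UNIV. h$i * G i x)) (at x)"
proof -
  have "\<exists>g. \<forall>z\<in>S. (\<lambda>k. f k z) sums g z \<and>
      (g has_derivative (\<lambda>h. \<Sum>i\<in>UNIV. h$i * G i z)) (at z within S)"
  proof (rule has_derivative_series[OF S(1) has_derivative_at_withinI[OF f'] _ S(3) F[OF S(3)]])
    fix e :: real assume "e > 0"
    then have "\<forall>\<^sub>F n in sequentially. \<forall>i. \<forall>z\<in>S. dist (\<Sum>k<n. p k i z) (G i z) < e / CARD('n)"
      by (intro eventually_all_finite uniform_limitD[OF p]) simp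
    then show "\<forall>\<^sub>F n in sequentially. \<forall>z\<in>S. \<forall>h.
        norm ((\<Sum>k<n. \<Sum>i\<in>UNIV. h$i * p k i z) - (\<Sum>i\<in>UNIV. h$i * G i z)) \<le> e * norm h"
    proof (elim eventually_mono, intro ballI allI)
      fix n z and h :: "real^'n"
      assume n: "\<forall>i. \<forall>z\<in>S. dist (\<Sum>k<n. p k i z) (G i z) < e / CARD('n)" and "z \<in> S"
      have "\<bar>(\<Sum>k<n. p k i z) - G i z\<bar> \<le> e / CARD('n)" for i
        using n \<open>z \<in> S\<close> by (auto simp: dist_real_def less_imp_le)
      from abs_sum_components_le[of "\<lambda>i. (\<Sum>k<n. p k i z) - G i z", OF this, of h]
      show "norm ((\<Sum>k<n. \<Sum>i\<in>UNIV. h$i * p k i z) - (\<Sum>i\<in>UNIV. h$i * G i z)) \<le> e * norm h"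
        by (simp add: sum.swap[of _ "{..<n}"] sum_distrib_left right_diff_distrib sum_subtractf)
    qed
  qed
  then obtain g where g: "\<And>z. z \<in> S \<Longrightarrow> (\<lambda>k. f k z) sums g z"
    "(g has_derivative (\<lambda>h. \<Sum>i\<in>UNIV. h$i * G i x)) (at x within S)"
    using S(3) by blast
  have "(g has_derivative (\<lambda>h. \<Sum>i\<in>UNIV. h$i * G i x)) (at x)"
    using g(2) at_within_open[OF S(3,2)] by simp
  moreover have "g z = F z" if "z \<in> S" for z
    using sums_unique2[OF g(1)[OF that] F[OF that]] .
  ultimately show ?thesis
    by (rule has_derivative_transform_within_open[OF _ S(2,3)])
qed

lemma
  fixes c :: "('n::finite \<Rightarrow> nat) \<Rightarrow> real" and a :: "real^'n"
  assumes hs: "\<And>x. x \<in> open_cube a \<rho> \<Longrightarrow> (\<lambda>\<alpha>. c \<alpha> * monomial a \<alpha> x) summable_on UNIV"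
    and x: "x \<in> open_cube a \<rho>"
  shows summable_on_monomial_partial: "(\<lambda>\<alpha>. c \<alpha> * monomial_partial i a \<alpha> x) summable_on UNIV"
    and has_derivative_power_series: "((\<lambda>x. \<Sum>\<^sub>\<infinity>\<alpha>. c \<alpha> * monomial a \<alpha> x) has_derivative
          (\<lambda>h. \<Sum>i\<in>UNIV. h$i * (\<Sum>\<^sub>\<infinity>\<alpha>. c \<alpha> * monomial_partial i a \<alpha> x))) (at x)"
proof -
  obtain s where s: "0 < s" "s < \<rho>" "x \<in> open_cube a s"
    using open_cube_shrink[OF x] by blast
  define S where "S = open_cube a s"
  have "s < (s + \<rho>) / 2" "(s + \<rho>) / 2 < \<rho>"
    using s by auto
  then obtain M where M: "M summable_on UNIV"
    "\<And>\<alpha> i z. z \<in> S \<Longrightarrow> \<bar>c \<alpha> * monomial_partial i a \<alpha> z\<bar> \<le> M \<alpha>"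
    using monomial_partial_majorant[OF hs s(1)] unfolding S_def by metis
  show "(\<lambda>\<alpha>. c \<alpha> * monomial_partial i a \<alpha> x) summable_on UNIV"
    using M s(3) by (intro summable_on_by_majorant[OF M(1)]) (auto simp: S_def)
  define enum :: "nat \<Rightarrow> 'n \<Rightarrow> nat" where "enum = from_nat_into UNIV"
  show "((\<lambda>x. \<Sum>\<^sub>\<infinity>\<alpha>. c \<alpha> * monomial a \<alpha> x) has_derivative
      (\<lambda>h. \<Sum>i\<in>UNIV. h$i * (\<Sum>\<^sub>\<infinity>\<alpha>. c \<alpha> * monomial_partial i a \<alpha> x))) (at x)"
  proof (rule has_derivative_series_cart[where f = "\<lambda>k z. c (enum k) * monomial a (enum k) z"
        and p = "\<lambda>k i z. c (enum k) * monomial_partial i a (enum k) z"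
        and G = "\<lambda>i z. \<Sum>\<^sub>\<infinity>\<alpha>. c \<alpha> * monomial_partial i a \<alpha> z"])
    show "convex S" "open S" "x \<in> S"
      using s by (auto simp: S_def convex_open_cube open_open_cube)
    show "((\<lambda>z. c (enum k) * monomial a (enum k) z) has_derivative
        (\<lambda>h. \<Sum>i\<in>UNIV. h$i * (c (enum k) * monomial_partial i a (enum k) z))) (at z)" for k z
      by (rule has_derivative_monomial)
    show "uniform_limit S (\<lambda>n z. \<Sum>k<n. c (enum k) * monomial_partial i a (enum k) z)
        (\<lambda>z. \<Sum>\<^sub>\<infinity>\<alpha>. c \<alpha> * monomial_partial i a \<alpha> z) sequentially" for i
      unfolding enum_def
      by (rule uniform_limit_from_nat_into_partial_sums[OF infinite_UNIV_multi_index M(1)])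
         (use M(2) in auto)
    show "(\<lambda>k. c (enum k) * monomial a (enum k) z) sums (\<Sum>\<^sub>\<infinity>\<alpha>. c \<alpha> * monomial a \<alpha> z)"
      if "z \<in> S" for z
      unfolding enum_def
      by (rule summable_on_imp_sums_from_nat_into[OF infinite_UNIV_multi_index hs])
         (use that open_cube_mono[of s \<rho> a] s in \<open>auto simp: S_def\<close>)
  qed
qed

lemma has_sum_sum:
  fixes f :: "'i \<Rightarrow> 'a \<Rightarrow> real"
  assumes "finite I" "\<And>i. i \<in> I \<Longrightarrow> (f i has_sum s i) A"
  shows "((\<lambda>x. \<Sum>i\<in>I. f i x) has_sum (\<Sum>i\<in>I. s i)) A"
  using assms by (induction I rule: finite_induct) (auto intro: has_sum_add)

lemma monomial_partial_fun_upd_Suc: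
  "monomial_partial i a (\<beta>(i := Suc (\<beta> i))) x = real (Suc (\<beta> i)) * monomial a \<beta> x"
proof -
  have "(\<Prod>l\<in>UNIV-{i}. (x$l - a$l) ^ (\<beta>(i := Suc (\<beta> i))) l) = (\<Prod>l\<in>UNIV-{i}. (x$l - a$l) ^ \<beta> l)"
    by (intro prod.cong) auto
  moreover have "monomial a \<beta> x = (x$i - a$i) ^ \<beta> i * (\<Prod>l\<in>UNIV-{i}. (x$l - a$l) ^ \<beta> l)"
    unfolding monomial_def by (simp add: prod.remove)
  ultimately show ?thesis by (simp add: monomial_partial_def)
qed

text \<open>The termwise differentiated series is again a power series: its coefficient at \<open>\<beta>\<close> is
  \<open>(\<beta> i + 1) c (\<beta> + e\<^sub>i)\<close>.\<close>
lemma has_sum_monomial_partial_reindex: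
  fixes c :: "('n::finite \<Rightarrow> nat) \<Rightarrow> real"
  assumes "((\<lambda>\<alpha>. c \<alpha> * monomial_partial i a \<alpha> x) has_sum S) UNIV"
  shows "((\<lambda>\<beta>. real (Suc (\<beta> i)) * c (\<beta>(i := Suc (\<beta> i))) * monomial a \<beta> x) has_sum S) UNIV"
proof -
  define up where "up \<beta> = \<beta>(i := Suc (\<beta> i))" for \<beta> :: "'n \<Rightarrow> nat"
  have "inj up"
  proof (rule injI)
    fix \<beta> \<gamma> assume "up \<beta> = up \<gamma>"
    then have "\<beta> l = \<gamma> l" for l
      unfolding up_def by (metis fun_upd_apply nat.inject)
    then show "\<beta> = \<gamma>" by auto
  qed
  have "range up = {\<alpha>. \<alpha> i \<noteq> 0}"
  proof (intro set_eqI iffI)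
    fix \<alpha> :: "'n \<Rightarrow> nat" assume "\<alpha> \<in> {\<alpha>. \<alpha> i \<noteq> 0}"
    then have "\<alpha> = up (\<alpha>(i := \<alpha> i - 1))" by (auto simp: up_def fun_eq_iff)
    then show "\<alpha> \<in> range up" by blast
  qed (auto simp: up_def)
  then have "((\<lambda>\<alpha>. c \<alpha> * monomial_partial i a \<alpha> x) has_sum S) (range up)"
    using assms by (subst has_sum_cong_neutral[where T = UNIV]) (auto simp: monomial_partial_def)
  then have "(((\<lambda>\<alpha>. c \<alpha> * monomial_partial i a \<alpha> x) \<circ> up) has_sum S) UNIV"
    by (subst (asm) has_sum_reindex[OF \<open>inj up\<close>])
  then show ?thesis
    by (simp add: o_def up_def monomial_partial_fun_upd_Suc mult_ac)
qed

lemma power_series_smooth_on: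
  fixes c :: "('n::finite \<Rightarrow> nat) \<Rightarrow> real" and a :: "real^'n"
  assumes "\<And>x. x \<in> open_cube a \<rho> \<Longrightarrow> ((\<lambda>\<alpha>. c \<alpha> * monomial a \<alpha> x) has_sum G x) UNIV"
  shows "smooth_on (open_cube a \<rho>) G"
proof (rule smooth_on_invariantI[of "\<lambda>G. \<exists>c. \<forall>x\<in>open_cube a \<rho>. ((\<lambda>\<alpha>. c \<alpha> * monomial a \<alpha> x) has_sum G x) UNIV"])
  fix G assume "\<exists>c. \<forall>x\<in>open_cube a \<rho>. ((\<lambda>\<alpha>. c \<alpha> * monomial a \<alpha> x) has_sum G x) UNIV"
  then obtain c where c: "\<And>x. x \<in> open_cube a \<rho> \<Longrightarrow> ((\<lambda>\<alpha>. c \<alpha> * monomial a \<alpha> x) has_sum G x) UNIV"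
    by blast
  then have hs: "\<And>x. x \<in> open_cube a \<rho> \<Longrightarrow> (\<lambda>\<alpha>. c \<alpha> * monomial a \<alpha> x) summable_on UNIV"
    using has_sum_imp_summable by blast
  define G' where "G' i x = (\<Sum>\<^sub>\<infinity>\<alpha>. c \<alpha> * monomial_partial i a \<alpha> x)" for i x
  have G: "(G has_derivative (\<lambda>h. \<Sum>i\<in>UNIV. h$i * G' i x)) (at x)" if x: "x \<in> open_cube a \<rho>" for x
    unfolding G'_def
    by (rule has_derivative_transform_within_open[OF has_derivative_power_series[OF hs x]
          open_open_cube x])
       (use c in \<open>auto simp: has_sum_iff\<close>)
  have G'_sum: "((\<lambda>\<alpha>. c \<alpha> * monomial_partial i a \<alpha> x) has_sum G' i x) UNIV"
    if "x \<in> open_cube a \<rho>" for x i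
    unfolding G'_def using summable_on_monomial_partial[OF hs that] by simp
  define c' where "c' u \<beta> = (\<Sum>i\<in>UNIV. u$i * (real (Suc (\<beta> i)) * c (\<beta>(i := Suc (\<beta> i)))))"
    for u :: "real^'n" and \<beta>
  show "(\<forall>y\<in>open_cube a \<rho>. G differentiable (at y)) \<and>
        (\<forall>u. (\<exists>c. \<forall>x\<in>open_cube a \<rho>. ((\<lambda>\<alpha>. c \<alpha> * monomial a \<alpha> x) has_sum dir_deriv u G x) UNIV)
          \<or> smooth_on (open_cube a \<rho>) (dir_deriv u G))"
  proof (intro conjI allI ballI disjI1 exI[of _ "c' _"])
    show "G differentiable (at y)" if "y \<in> open_cube a \<rho>" for y
      using G[OF that] by (auto simp: differentiable_def)
    fix u :: "real^'n" and x assume x: "x \<in> open_cube a \<rho>"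
    have "((\<lambda>\<beta>. \<Sum>i\<in>UNIV. u$i * (real (Suc (\<beta> i)) * c (\<beta>(i := Suc (\<beta> i))) * monomial a \<beta> x))
        has_sum (\<Sum>i\<in>UNIV. u$i * G' i x)) UNIV"
      by (intro has_sum_sum has_sum_cmult_right has_sum_monomial_partial_reindex G'_sum x) simp
    then show "((\<lambda>\<beta>. c' u \<beta> * monomial a \<beta> x) has_sum dir_deriv u G x) UNIV"
      by (simp add: dir_deriv_eq[OF G[OF x]] c'_def sum_distrib_right mult.assoc)
  qed
qed (use assms in blast)

lemma real_analytic_at_imp_smooth_on:
  fixes g :: "real^'n \<Rightarrow> real"
  assumes "real_analytic_at g a"
  obtains N where "open N" "a \<in> N" "smooth_on N g"
proof -
  obtain r c where r: "r > 0"
    and hs: "\<And>x. x \<in> ball a r \<Longrightarrow> ((\<lambda>\<alpha>. c \<alpha> * monomial a \<alpha> x) has_sum g x) UNIV"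
    using assms unfolding real_analytic_at_def monomial_def by blast
  have "smooth_on (open_cube a (r / real CARD('n))) g"
    by (rule power_series_smooth_on[where c = c]) (use hs open_cube_subset_ball[OF r] in blast)
  moreover have "a \<in> open_cube a (r / real CARD('n))"
    using r by (simp add: open_cube_def)
  ultimately show ?thesis
    using open_open_cube that by blast
qed

lemma real_analytic_on_imp_smooth_on:
  fixes g :: "real^'n \<Rightarrow> real"
  assumes "\<forall>a\<in>K. real_analytic_at g a"
  obtains U where "open U" "K \<subseteq> U" "smooth_on U g"
proof -
  define U where "U = \<Union>{N. open N \<and> smooth_on N g}"
  have "K \<subseteq> U"
  proof
    fix a assume "a \<in> K"
    then obtain N where "open N" "a \<in> N" "smooth_on N g"
      using real_analytic_at_imp_smooth_on assms by metis
    then show "a \<in> U"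
      unfolding U_def by blast
  qed
  moreover have "open U"
    unfolding U_def by auto
  moreover have "smooth_on U g"
    by (rule smooth_on_locally) (auto simp: U_def)
  ultimately show ?thesis
    using that by blast
qed

lemma smooth_on_Phih:
  fixes g :: "real^'n \<Rightarrow> real"
  assumes U: "smooth_on U g" and T: "invertible_affine T" and S: "open S"
    and TS: "\<And>x. x \<in> S \<Longrightarrow> T x + omega g v \<in> U"
  shows "smooth_on S (Phih g v h T)"
proof -
  obtain A b where A: "linear A" and T_eq: "T = (\<lambda>x. A x + b)"
    using T unfolding invertible_affine_def by blast
  define w where "w = omega g v"
  have l: "linear (\<lambda>x. (v \<bullet> A x) / h)"
    using A by (auto simp: linear_iff inner_add_right add_divide_distrib)
  have "Phih g v h T = (\<lambda>x. (1/h) * g (A x + (b + w)) + (v \<bullet> A x) / h + (v \<bullet> b - g w) / h)"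
    by (auto simp: fun_eq_iff Phih_def Phi_def T_eq w_def inner_add_right add_divide_distrib
        diff_divide_distrib add.assoc)
  moreover have "smooth_on S (\<lambda>x. (1/h) * g (A x + (b + w)) + (v \<bullet> A x) / h + (v \<bullet> b - g w) / h)"
    by (rule smooth_on_affine_comp[OF U A l S]) (use TS in \<open>auto simp: T_eq w_def add.assoc\<close>)
  ultimately show ?thesis by simp
qed

section \<open>Convexity and the Hessian\<close>

lemma convex_on_above_tangent:
  fixes \<phi> :: "real \<Rightarrow> real"
  assumes cv: "convex_on J \<phi>" and J: "0 \<in> J" "h \<in> J" "h > 0"
    and \<phi>': "(\<phi> has_real_derivative p) (at 0)"
  shows "h * p \<le> \<phi> h - \<phi> 0"
proof -
  have "((\<lambda>t. (\<phi> (0 + t) - \<phi> 0) / t) \<longlongrightarrow> p) (at_right 0)"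
    using \<phi>' unfolding DERIV_def by (rule filterlim_mono) (simp_all add: at_le)
  moreover have "eventually (\<lambda>t. (\<phi> (0 + t) - \<phi> 0) / t \<le> (\<phi> h - \<phi> 0) / h) (at_right 0)"
    using eventually_at_right_real[OF J(3)]
  proof eventually_elim
    case (elim t)
    then have t: "0 < t" "t < h" by auto
    have "(\<phi> 0 - \<phi> t) / (0 - t) \<le> (\<phi> 0 - \<phi> h) / (0 - h)"
      by (rule convex_on_slope_le(1)[OF cv J(1,2) t])
    then show ?case using t by (simp add: divide_simps algebra_simps)
  qed
  ultimately have "p \<le> (\<phi> h - \<phi> 0) / h"
    by (rule tendsto_upperbound) simp
  then show ?thesis using J(3) by (simp add: field_simps)
qed

lemma convex_on_second_deriv_nonneg:
  fixes \<phi> \<psi> :: "real \<Rightarrow> real"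
  assumes cv: "convex_on J \<phi>" and J: "open J" "0 \<in> J"
    and \<phi>': "\<And>s. s \<in> J \<Longrightarrow> (\<phi> has_real_derivative \<psi> s) (at s)"
    and \<psi>': "(\<psi> has_real_derivative q) (at 0)"
  shows "q \<ge> 0"
proof (rule ccontr)
  assume "\<not> q \<ge> 0"
  then obtain d where d: "d > 0" "\<And>h. h > 0 \<Longrightarrow> h < d \<Longrightarrow> \<psi> (0 + h) < \<psi> 0"
    using DERIV_neg_dec_right[OF \<psi>'] by force
  obtain e where e: "e > 0" "ball 0 e \<subseteq> J"
    using J open_contains_ball by blast
  define h where "h = min d e / 2"
  have h: "h > 0" "h < d" "{0..h} \<subseteq> J"
    using d(1) e by (auto simp: h_def dist_real_def)
  obtain z where z: "0 < z" "z < h" "\<phi> h - \<phi> 0 = (h - 0) * \<psi> z"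
    using MVT2[OF h(1), of \<phi> \<psi>] \<phi>' h(3) by force
  have "\<phi> h - \<phi> 0 < h * \<psi> 0"
    using d(2)[of z] z h by (simp add: mult_strict_left_mono)
  moreover have "h * \<psi> 0 \<le> \<phi> h - \<phi> 0"
    by (rule convex_on_above_tangent[OF cv J(2)]) (use h \<phi>' J(2) in auto)
  ultimately show False by simp
qed

lemma convex_on_along_line:
  fixes F :: "'a::real_vector \<Rightarrow> real"
  assumes "convex_on S F"
  shows "convex_on {s. y + s *\<^sub>R z \<in> S} (\<lambda>s. F (y + s *\<^sub>R z))"
proof -
  have line: "y + (u * s1 + v * s2) *\<^sub>R z = u *\<^sub>R (y + s1 *\<^sub>R z) + v *\<^sub>R (y + s2 *\<^sub>R z)"
    if "u + v = 1" for u v s1 s2 :: real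
  proof -
    have "y = u *\<^sub>R y + v *\<^sub>R y" using that by (metis scaleR_add_left scaleR_one)
    then show ?thesis by (simp add: algebra_simps)
  qed
  have "convex S"
    using assms convex_on_imp_convex by blast
  show ?thesis
    unfolding convex_on_def
  proof (intro conjI ballI allI impI convexI)
    fix s1 s2 u v :: real
    assume s: "s1 \<in> {s. y + s *\<^sub>R z \<in> S}" "s2 \<in> {s. y + s *\<^sub>R z \<in> S}" "0 \<le> u" "0 \<le> v" "u + v = 1"
    show "u *\<^sub>R s1 + v *\<^sub>R s2 \<in> {s. y + s *\<^sub>R z \<in> S}"
      using convexD[OF \<open>convex S\<close>, of "y + s1 *\<^sub>R z" "y + s2 *\<^sub>R z" u v] line[OF s(5)] s by simp
    have "F (u *\<^sub>R (y + s1 *\<^sub>R z) + v *\<^sub>R (y + s2 *\<^sub>R z)) \<le> u * F (y + s1 *\<^sub>R z) + v * F (y + s2 *\<^sub>R z)"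
      using assms s unfolding convex_on_def by blast
    then show "F (y + (u *\<^sub>R s1 + v *\<^sub>R s2) *\<^sub>R z) \<le> u * F (y + s1 *\<^sub>R z) + v * F (y + s2 *\<^sub>R z)"
      using line[OF s(5)] by simp
  qed
qed

definition hessian :: "(real^'n \<Rightarrow> real) \<Rightarrow> real^'n \<Rightarrow> real^'n^'n" where
  "hessian f x = (\<chi> i j. partial i (partial j f) x)"

lemma hessdet_eq_abs_det_hessian: "hessdet f x = \<bar>det (hessian f x)\<bar>"
  by (simp add: hessdet_def hessian_def)

lemma smooth_convex_on_hessian_psd:
  fixes F :: "real^'n \<Rightarrow> real"
  assumes F: "smooth_on S F" "convex_on S F" and S: "open S" "y \<in> S"
  shows "0 \<le> z \<bullet> (hessian F y *v z)"
proof -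
  define J where "J = {s::real. y + s *\<^sub>R z \<in> S}"
  have "open J"
    unfolding J_def by (rule open_vimage[OF S(1), unfolded vimage_def]) (intro continuous_intros)
  moreover have "0 \<in> J"
    using S(2) by (simp add: J_def)
  moreover have "((\<lambda>s. F (y + s *\<^sub>R z)) has_real_derivative
      (\<Sum>k\<in>UNIV. z$k * partial k F (y + s *\<^sub>R z))) (at s)" if "s \<in> J" for s
    using smooth_on_has_real_derivative_along_line[OF F(1)] dir_deriv_eq_sum_partial[OF F(1)] that
    by (simp add: J_def)
  moreover have "((\<lambda>s. \<Sum>k\<in>UNIV. z$k * partial k F (y + s *\<^sub>R z)) has_real_derivative
      (\<Sum>k\<in>UNIV. z$k * (\<Sum>i\<in>UNIV. z$i * partial i (partial k F) y))) (at 0)"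
  proof (intro DERIV_sum DERIV_cmult)
    fix k
    have "smooth_on S (partial k F)"
      using smooth_on_iter_partial[OF F(1), of "[k]"] by simp
    from smooth_on_has_real_derivative_along_line[OF this, of y 0] dir_deriv_eq_sum_partial[OF this S(2)]
    show "((\<lambda>s. partial k F (y + s *\<^sub>R z)) has_real_derivative
        (\<Sum>i\<in>UNIV. z$i * partial i (partial k F) y)) (at 0)"
      using S(2) by simp
  qed
  ultimately have "0 \<le> (\<Sum>k\<in>UNIV. z$k * (\<Sum>i\<in>UNIV. z$i * partial i (partial k F) y))"
    by (rule convex_on_second_deriv_nonneg[OF convex_on_along_line[OF F(2), of y z, folded J_def]])
  also have "\<dots> = (\<Sum>i\<in>UNIV. \<Sum>k\<in>UNIV. z$i * partial i (partial k F) y * z$k)"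
    by (subst sum.swap) (simp add: sum_distrib_left mult_ac)
  also have "\<dots> = z \<bullet> (hessian F y *v z)"
    by (simp add: hessian_def inner_vec_def matrix_vector_mult_def sum_distrib_left mult_ac)
  finally show ?thesis .
qed

lemma psd_imp_det_nonneg:
  fixes H :: "real^'n^'n"
  assumes psd: "\<And>z. 0 \<le> z \<bullet> (H *v z)"
  shows "det H \<ge> 0"
proof (rule ccontr)
  assume "\<not> det H \<ge> 0"
  define q where "q s = det (s *\<^sub>R H + (1 - s) *\<^sub>R mat 1)" for s :: real
  have "continuous_on UNIV q"
    unfolding q_def det_def by (simp add: mat_def) (intro continuous_intros)
  moreover have "q 0 = 1" "q 1 = det H"
    by (simp_all add: q_def)
  ultimately obtain s where s: "0 \<le> s" "s \<le> 1" "q s = 0"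
    using IVT2[of q 1 0 0] \<open>\<not> det H \<ge> 0\<close> by (auto simp: continuous_on_eq_continuous_at)
  have "s \<noteq> 1"
    using s(3) \<open>q 1 = det H\<close> \<open>\<not> det H \<ge> 0\<close> by auto
  define M where "M = s *\<^sub>R H + (1 - s) *\<^sub>R mat 1"
  have "det M = 0"
    using s(3) by (simp add: q_def M_def)
  then have "\<not> (\<exists>B. B ** M = mat 1)"
    by (simp add: invertible_left_inverse[symmetric] invertible_det_nz)
  then obtain w where "w \<noteq> 0" "M *v w = 0"
    using matrix_left_invertible_ker[of M] by blast
  have "0 = w \<bullet> (M *v w)"
    using \<open>M *v w = 0\<close> by simp
  also have "\<dots> = s * (w \<bullet> (H *v w)) + (1 - s) * (w \<bullet> w)"
    by (simp add: M_def scaleR_matrix_vector_assoc[symmetric] matrix_vector_mult_add_rdistrib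
        matrix_vector_mul_lid inner_add_right)
  finally have "0 = s * (w \<bullet> (H *v w)) + (1 - s) * (w \<bullet> w)" .
  moreover have "0 \<le> s * (w \<bullet> (H *v w))"
    using s psd by simp
  moreover have "0 < (1 - s) * (w \<bullet> w)"
    using s \<open>s \<noteq> 1\<close> \<open>w \<noteq> 0\<close> by simp
  ultimately show False by linarith
qed

lemma smooth_convex_on_hessian_det_nonneg:
  fixes F :: "real^'n \<Rightarrow> real"
  assumes "smooth_on S F" "convex_on S F" "open S" "y \<in> S"
  shows "det (hessian F y) \<ge> 0"
  using psd_imp_det_nonneg smooth_convex_on_hessian_psd[OF assms] by blast

section \<open>Functions with bounded second derivatives on [-1, 1]\<close>

definition C2_bounded :: "(real \<Rightarrow> real) \<Rightarrow> real \<Rightarrow> bool" where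
  "C2_bounded f B \<longleftrightarrow> (\<exists>f' f''. \<forall>t\<in>{-1..1}. (f has_real_derivative f' t) (at t) \<and>
      (f' has_real_derivative f'' t) (at t) \<and> \<bar>f t\<bar> \<le> B \<and> \<bar>f' t\<bar> \<le> B \<and> \<bar>f'' t\<bar> \<le> B)"

lemma C2_bounded_nonneg: "C2_bounded f B \<Longrightarrow> B \<ge> 0"
  unfolding C2_bounded_def by (metis abs_ge_zero atLeastAtMost_iff neg_le_0_iff_le order_trans zero_le_one)

lemma C2_bounded_const: "C2_bounded (\<lambda>t. c) \<bar>c\<bar>"
  unfolding C2_bounded_def by (intro exI[of _ "\<lambda>t. 0"]) (auto intro!: derivative_eq_intros)

lemma C2_bounded_add:
  assumes "C2_bounded f A" "C2_bounded g B"
  shows "C2_bounded (\<lambda>t. f t + g t) (A + B)"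
proof -
  obtain f' f'' where f: "\<forall>t\<in>{-1..1}. (f has_real_derivative f' t) (at t) \<and>
      (f' has_real_derivative f'' t) (at t) \<and> \<bar>f t\<bar> \<le> A \<and> \<bar>f' t\<bar> \<le> A \<and> \<bar>f'' t\<bar> \<le> A"
    using assms(1) unfolding C2_bounded_def by blast
  obtain g' g'' where g: "\<forall>t\<in>{-1..1}. (g has_real_derivative g' t) (at t) \<and>
      (g' has_real_derivative g'' t) (at t) \<and> \<bar>g t\<bar> \<le> B \<and> \<bar>g' t\<bar> \<le> B \<and> \<bar>g'' t\<bar> \<le> B"
    using assms(2) unfolding C2_bounded_def by blast
  show ?thesis
    unfolding C2_bounded_def
  proof (rule exI[of _ "\<lambda>t. f' t + g' t"], rule exI[of _ "\<lambda>t. f'' t + g'' t"], intro ballI conjI)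
    fix t :: real assume "t \<in> {-1..1}"
    with f g show "((\<lambda>t. f t + g t) has_real_derivative f' t + g' t) (at t)"
      and "((\<lambda>t. f' t + g' t) has_real_derivative f'' t + g'' t) (at t)"
      by (auto intro!: derivative_eq_intros)
    from \<open>t \<in> {-1..1}\<close> f g show "\<bar>f t + g t\<bar> \<le> A + B" and "\<bar>f' t + g' t\<bar> \<le> A + B"
      and "\<bar>f'' t + g'' t\<bar> \<le> A + B"
      by (meson abs_triangle_ineq add_mono order_trans)+
  qed
qed

lemma C2_bounded_cmult:
  assumes "C2_bounded f A"
  shows "C2_bounded (\<lambda>t. c * f t) (\<bar>c\<bar> * A)"
proof -
  obtain f' f'' where f: "\<forall>t\<in>{-1..1}. (f has_real_derivative f' t) (at t) \<and>
      (f' has_real_derivative f'' t) (at t) \<and> \<bar>f t\<bar> \<le> A \<and> \<bar>f' t\<bar> \<le> A \<and> \<bar>f'' t\<bar> \<le> A"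
    using assms unfolding C2_bounded_def by blast
  show ?thesis
    unfolding C2_bounded_def
  proof (rule exI[of _ "\<lambda>t. c * f' t"], rule exI[of _ "\<lambda>t. c * f'' t"], intro ballI conjI)
    fix t :: real assume "t \<in> {-1..1}"
    with f show "((\<lambda>t. c * f t) has_real_derivative c * f' t) (at t)"
      and "((\<lambda>t. c * f' t) has_real_derivative c * f'' t) (at t)"
      by (auto intro!: derivative_eq_intros)
    from \<open>t \<in> {-1..1}\<close> f show "\<bar>c * f t\<bar> \<le> \<bar>c\<bar> * A" and "\<bar>c * f' t\<bar> \<le> \<bar>c\<bar> * A"
      and "\<bar>c * f'' t\<bar> \<le> \<bar>c\<bar> * A"
      by (simp_all add: abs_mult mult_left_mono)
  qed
qed

text \<open>The factor 4 bounds the binomial coefficients 1, 2, 1 of the Leibniz rule.\<close>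
lemma C2_bounded_mult:
  assumes "C2_bounded f A" "C2_bounded g B"
  shows "C2_bounded (\<lambda>t. f t * g t) (4 * A * B)"
proof -
  obtain f' f'' where f: "\<forall>t\<in>{-1..1}. (f has_real_derivative f' t) (at t) \<and>
      (f' has_real_derivative f'' t) (at t) \<and> \<bar>f t\<bar> \<le> A \<and> \<bar>f' t\<bar> \<le> A \<and> \<bar>f'' t\<bar> \<le> A"
    using assms(1) unfolding C2_bounded_def by blast
  obtain g' g'' where g: "\<forall>t\<in>{-1..1}. (g has_real_derivative g' t) (at t) \<and>
      (g' has_real_derivative g'' t) (at t) \<and> \<bar>g t\<bar> \<le> B \<and> \<bar>g' t\<bar> \<le> B \<and> \<bar>g'' t\<bar> \<le> B"
    using assms(2) unfolding C2_bounded_def by blast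
  have AB: "A \<ge> 0" "B \<ge> 0"
    using assms by (simp_all add: C2_bounded_nonneg)
  have prod: "\<bar>u * w\<bar> \<le> A * B" if "\<bar>u\<bar> \<le> A" "\<bar>w\<bar> \<le> B" for u w
    using that AB by (simp add: abs_mult mult_mono)
  have AB': "0 \<le> A * B" "4 * A * B = 4 * (A * B)"
    using AB by simp_all
  show ?thesis
    unfolding C2_bounded_def
  proof (rule exI[of _ "\<lambda>t. f' t * g t + f t * g' t"],
      rule exI[of _ "\<lambda>t. f'' t * g t + 2 * (f' t * g' t) + f t * g'' t"], intro ballI conjI)
    fix t :: real assume "t \<in> {-1..1}"
    then have ft: "(f has_real_derivative f' t) (at t)" "(f' has_real_derivative f'' t) (at t)"
        "\<bar>f t\<bar> \<le> A" "\<bar>f' t\<bar> \<le> A" "\<bar>f'' t\<bar> \<le> A"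
      and gt: "(g has_real_derivative g' t) (at t)" "(g' has_real_derivative g'' t) (at t)"
        "\<bar>g t\<bar> \<le> B" "\<bar>g' t\<bar> \<le> B" "\<bar>g'' t\<bar> \<le> B"
      using f g by auto
    show "((\<lambda>t. f t * g t) has_real_derivative f' t * g t + f t * g' t) (at t)"
      using ft gt by (auto intro!: derivative_eq_intros)
    show "((\<lambda>t. f' t * g t + f t * g' t) has_real_derivative
        f'' t * g t + 2 * (f' t * g' t) + f t * g'' t) (at t)"
      using ft gt by (auto intro!: derivative_eq_intros)
    show "\<bar>f t * g t\<bar> \<le> 4 * A * B"
      using prod[OF ft(3) gt(3)] AB' by linarith
    show "\<bar>f' t * g t + f t * g' t\<bar> \<le> 4 * A * B"
      using prod[OF ft(4) gt(3)] prod[OF ft(3) gt(4)] AB'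
        abs_triangle_ineq[of "f' t * g t" "f t * g' t"] by linarith
    have "\<bar>2 * (f' t * g' t)\<bar> = 2 * \<bar>f' t * g' t\<bar>"
      by (simp add: abs_mult)
    then show "\<bar>f'' t * g t + 2 * (f' t * g' t) + f t * g'' t\<bar> \<le> 4 * A * B"
      using prod[OF ft(5) gt(3)] prod[OF ft(4) gt(4)] prod[OF ft(3) gt(5)] AB'
        abs_triangle_ineq[of "f'' t * g t + 2 * (f' t * g' t)" "f t * g'' t"]
        abs_triangle_ineq[of "f'' t * g t" "2 * (f' t * g' t)"] by linarith
  qed
qed

lemma C2_bounded_sum:
  assumes "finite I" "\<And>i. i \<in> I \<Longrightarrow> C2_bounded (f i) (B i)"
  shows "C2_bounded (\<lambda>t. \<Sum>i\<in>I. f i t) (\<Sum>i\<in>I. B i)"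
  using assms
proof (induction I rule: finite_induct)
  case empty
  then show ?case using C2_bounded_const[of 0] by simp
next
  case (insert j I)
  then show ?case using C2_bounded_add[of "f j" "B j"] by simp
qed

lemma C2_bounded_prod:
  assumes "finite I" "\<And>i. i \<in> I \<Longrightarrow> C2_bounded (f i) M"
  shows "C2_bounded (\<lambda>t. \<Prod>i\<in>I. f i t) ((4 * M) ^ card I)"
  using assms
proof (induction I rule: finite_induct)
  case empty
  then show ?case using C2_bounded_const[of 1] by simp
next
  case (insert j I)
  then have "C2_bounded (\<lambda>t. f j t * (\<Prod>i\<in>I. f i t)) (4 * M * (4 * M) ^ card I)"
    by (intro C2_bounded_mult) auto
  then show ?case
    using insert by (simp add: mult_ac)
qed

lemma abs_of_int_sign: "\<bar>real_of_int (sign p)\<bar> = 1"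
  by (simp add: sign_def)

lemma C2_bounded_det:
  fixes E :: "real \<Rightarrow> real^'n^'n"
  assumes "\<And>i k. C2_bounded (\<lambda>t. E t $ i $ k) M"
  shows "C2_bounded (\<lambda>t. det (E t)) (fact CARD('n) * (4 * M) ^ CARD('n))"
proof -
  have "C2_bounded (\<lambda>t. \<Prod>i\<in>UNIV. E t $ i $ p i) ((4 * M) ^ CARD('n))" for p
    using C2_bounded_prod[of UNIV "\<lambda>i t. E t $ i $ p i" M] assms by simp
  then have "C2_bounded (\<lambda>t. of_int (sign p) * (\<Prod>i\<in>UNIV. E t $ i $ p i))
      (\<bar>of_int (sign p)\<bar> * (4 * M) ^ CARD('n))" for p
    by (rule C2_bounded_cmult)
  then have "C2_bounded (\<lambda>t. of_int (sign p) * (\<Prod>i\<in>UNIV. E t $ i $ p i)) ((4 * M) ^ CARD('n))"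
    for p by (simp add: abs_of_int_sign)
  then have "C2_bounded (\<lambda>t. \<Sum>p\<in>{p. p permutes (UNIV::'n set)}. of_int (sign p) * (\<Prod>i\<in>UNIV. E t $ i $ p i))
      (\<Sum>p\<in>{p. p permutes (UNIV::'n set)}. (4 * M) ^ CARD('n))"
    by (intro C2_bounded_sum) (simp_all add: finite_permutations)
  then show ?thesis
    by (simp add: det_def card_permutations)
qed

lemma taylor_upper_bound:
  fixes f f' f'' :: "real \<Rightarrow> real"
  assumes f': "\<And>t. t \<in> {-1..1} \<Longrightarrow> (f has_real_derivative f' t) (at t)"
    and f'': "\<And>t. t \<in> {-1..1} \<Longrightarrow> (f' has_real_derivative f'' t) (at t)"
    and B: "\<And>t. t \<in> {-1..1} \<Longrightarrow> f'' t \<le> B"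
    and t: "t \<in> {-1..1}"
  shows "f t \<le> f 0 + f' 0 * t + B / 2 * t\<^sup>2"
proof (cases "t = 0")
  case False
  define diff where "diff m = (if m = 0 then f else if m = 1 then f' else f'')" for m :: nat
  obtain \<xi> where \<xi>: "if t < 0 then t < \<xi> \<and> \<xi> < 0 else 0 < \<xi> \<and> \<xi> < t"
    "f t = (\<Sum>m<2. diff m 0 / fact m * (t - 0) ^ m) + diff 2 \<xi> / fact 2 * (t - 0) ^ 2"
  proof (atomize_elim, rule Taylor[of 2 diff f "-1" 1 0 t])
    show "\<forall>m t. m < 2 \<and> -1 \<le> t \<and> t \<le> 1 \<longrightarrow> (diff m has_real_derivative diff (Suc m) t) (at t)"
      using f' f'' by (auto simp: diff_def less_2_cases_iff)
  qed (use t False in \<open>auto simp: diff_def\<close>)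
  have "\<xi> \<in> {-1..1}"
    using \<xi>(1) t by (auto split: if_splits)
  then have "f'' \<xi> / 2 * t\<^sup>2 \<le> B / 2 * t\<^sup>2"
    using B by (intro mult_right_mono) auto
  moreover have "f t = f 0 + f' 0 * t + f'' \<xi> / 2 * t\<^sup>2"
    using \<xi>(2) by (simp add: diff_def numeral_2_eq_2)
  ultimately show ?thesis by linarith
qed simp

lemma glaeser_inequality:
  fixes f f' f'' :: "real \<Rightarrow> real"
  assumes nonneg: "\<And>t. t \<in> {-1..1} \<Longrightarrow> 0 \<le> f t"
    and f': "\<And>t. t \<in> {-1..1} \<Longrightarrow> (f has_real_derivative f' t) (at t)"
    and f'': "\<And>t. t \<in> {-1..1} \<Longrightarrow> (f' has_real_derivative f'' t) (at t)"
    and B: "\<And>t. t \<in> {-1..1} \<Longrightarrow> f'' t \<le> B" "\<bar>f' 0\<bar> \<le> B"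
  shows "(f' 0)\<^sup>2 \<le> 2 * B * f 0"
proof (cases "f' 0 = 0")
  case True
  then show ?thesis using B(2) nonneg[of 0] by simp
next
  case False
  then have "B > 0" using B(2) by linarith
  define t where "t = - f' 0 / B"
  have t: "t \<in> {-1..1}"
    using B(2) \<open>B > 0\<close> by (auto simp: t_def abs_le_iff divide_simps)
  have "0 \<le> f 0 + f' 0 * t + B / 2 * t\<^sup>2"
    using nonneg[OF t] taylor_upper_bound[OF f' f'' B(1) t] by linarith
  also have "\<dots> = f 0 - (f' 0)\<^sup>2 / (2 * B)"
    using \<open>B > 0\<close> by (simp add: t_def field_simps power2_eq_square)
  finally show ?thesis
    using \<open>B > 0\<close> by (simp add: field_simps)
qed

section \<open>The Hessian determinant along a coordinate line\<close>

lemma axis_segment_subset_cball: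
  "t \<in> {-1..1} \<Longrightarrow> x + t *\<^sub>R axis j (1::real) \<in> cball x 1"
  by (simp add: dist_norm abs_le_iff)

lemma C2_bounded_along_axis:
  fixes G :: "real^'n \<Rightarrow> real"
  assumes G: "smooth_on S G" and S: "cball x 1 \<subseteq> S"
    and bounds: "\<And>y. y \<in> S \<Longrightarrow> \<bar>G y\<bar> \<le> B" "\<And>y. y \<in> S \<Longrightarrow> \<bar>partial j G y\<bar> \<le> B"
      "\<And>y. y \<in> S \<Longrightarrow> \<bar>partial j (partial j G) y\<bar> \<le> B"
  shows "C2_bounded (\<lambda>t. G (x + t *\<^sub>R axis j 1)) B"
proof -
  have line: "x + t *\<^sub>R axis j 1 \<in> S" if "t \<in> {-1..1}" for t
    using axis_segment_subset_cball[OF that] S by blast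
  have deriv: "((\<lambda>s. H (x + s *\<^sub>R axis j 1)) has_real_derivative partial j H (x + t *\<^sub>R axis j 1)) (at t)"
    if "smooth_on S H" "t \<in> {-1..1}" for H t
    using smooth_on_has_real_derivative_along_line[OF that(1) line[OF that(2)]]
    by (simp add: partial_eq_dir_deriv)
  have "smooth_on S (partial j G)"
    using smooth_on_iter_partial[OF G, of "[j]"] by simp
  then show ?thesis
    unfolding C2_bounded_def
    using deriv[OF G] deriv[of "partial j G"] bounds[OF line]
    by (intro exI[of _ "\<lambda>t. partial j G (x + t *\<^sub>R axis j 1)"]
        exI[of _ "\<lambda>t. partial j (partial j G) (x + t *\<^sub>R axis j 1)"] ballI conjI) simp_all
qed

lemma partial_hessdet_sq_le:
  fixes F :: "real^'n \<Rightarrow> real"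
  assumes S: "open S" "cball x 1 \<subseteq> S" and F: "smooth_on S F" "convex_on S F"
    and bound: "\<And>y is. y \<in> S \<Longrightarrow> length is \<le> 4 \<Longrightarrow> \<bar>iter_partial is F y\<bar> \<le> B"
  shows "(partial j (hessdet F) x)\<^sup>2 \<le> 2 * (fact CARD('n) * (4 * B) ^ CARD('n)) * hessdet F x"
proof -
  define E where "E t = hessian F (x + t *\<^sub>R axis j 1)" for t
  have "C2_bounded (\<lambda>t. E t $ i $ k) B" for i k
    unfolding E_def hessian_def
    using C2_bounded_along_axis[OF smooth_on_iter_partial[OF F(1), of "[i, k]"] S(2)]
      bound[of _ "[i, k]"] bound[of _ "[j, i, k]"] bound[of _ "[j, j, i, k]"]
    by simp
  then have "C2_bounded (\<lambda>t. det (E t)) (fact CARD('n) * (4 * B) ^ CARD('n))"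
    by (rule C2_bounded_det)
  then obtain D1 D2 where D: "\<And>t. t \<in> {-1..1} \<Longrightarrow>
      ((\<lambda>t. det (E t)) has_real_derivative D1 t) (at t) \<and> (D1 has_real_derivative D2 t) (at t) \<and>
      \<bar>D1 t\<bar> \<le> fact CARD('n) * (4 * B) ^ CARD('n) \<and> \<bar>D2 t\<bar> \<le> fact CARD('n) * (4 * B) ^ CARD('n)"
    unfolding C2_bounded_def by blast
  have det_nonneg: "det (hessian F y) \<ge> 0" if "y \<in> S" for y
    using smooth_convex_on_hessian_det_nonneg[OF F S(1) that] .
  have line: "x + t *\<^sub>R axis j 1 \<in> S" if "t \<in> {-1..1}" for t
    using axis_segment_subset_cball[OF that] S(2) by blast
  have "partial j (hessdet F) x = partial j (\<lambda>y. det (hessian F y)) x"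
    unfolding partial_eq_dir_deriv
    by (rule dir_deriv_cong[OF S(1)]) (use S(2) det_nonneg in \<open>auto simp: hessdet_eq_abs_det_hessian\<close>)
  also have "\<dots> = deriv (\<lambda>t. det (E t)) 0"
    by (simp add: partial_def E_def)
  also have "\<dots> = D1 0"
    using D[of 0] by (auto intro: DERIV_imp_deriv)
  finally have "partial j (hessdet F) x = D1 0" .
  moreover have "hessdet F x = det (E 0)"
    using det_nonneg[of x] S(2) by (simp add: hessdet_eq_abs_det_hessian E_def subset_eq)
  moreover have "(D1 0)\<^sup>2 \<le> 2 * (fact CARD('n) * (4 * B) ^ CARD('n)) * det (E 0)"
    by (rule glaeser_inequality[where f'' = D2])
       (use D det_nonneg line in \<open>auto simp: E_def abs_le_iff\<close>)
  ultimately show ?thesis by simp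
qed

theorem lemma4p6:
  fixes g :: "real^'n \<Rightarrow> real" and k :: nat and m M c h0 R :: real
    and T :: "real^'n \<Rightarrow> real \<Rightarrow> real^'n \<Rightarrow> real^'n" and j :: 'n
  assumes dim: "2 \<le> CARD('n)" "CARD('n) \<le> 4"
    and analytic: "\<forall>a\<in>cube 2. real_analytic_at g a"
    and convex: "convex_on (cube 2) g"
    and ftype: "finite_type_on (cube 1) g k m M"
    and c_phi: "c > 0"
      "\<forall>v. admissible g v \<longrightarrow> (\<forall>x\<in>ball 0 (1/2). (c * norm x) ^ k \<le> Phi g v x)"
    and h0: "0 < h0" "h0 \<le> (c / 4) ^ k"
    and T: "\<forall>v h. admissible g v \<and> 0 < h \<and> h < h0 \<longrightarrow>
              invertible_affine (T v h) \<and>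
              ball 0 1 \<subseteq> (T v h) -` sublevel g v h \<and>
              (T v h) -` sublevel g v h \<subseteq> ball 0 (real CARD('n))"
    and R: "R \<ge> 100 * real CARD('n)"
    and standing: "\<exists>k' m' M'. \<forall>v h. admissible g v \<and> 0 < h \<and> h < h0 \<longrightarrow>
              (\<forall>x\<in>ball 0 R. T v h x + omega g v \<in> cube 2) \<and>
              convex_on (ball 0 R) (Phih g v h (T v h)) \<and>
              finite_type_on (ball 0 R) (Phih g v h (T v h)) k' m' M'"
  shows "\<exists>C. \<forall>v h. admissible g v \<and> 0 < h \<and> h < h0 \<longrightarrow>
           (\<forall>x\<in>ball 0 (R - 1).
              (partial j (hessdet (Phih g v h (T v h))) x) ^ 2
                \<le> C * hessdet (Phih g v h (T v h)) x)"
proof -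
  obtain k' m' M' where st: "\<And>v h. admissible g v \<Longrightarrow> 0 < h \<Longrightarrow> h < h0 \<Longrightarrow>
      (\<forall>x\<in>ball 0 R. T v h x + omega g v \<in> cube 2) \<and>
      convex_on (ball 0 R) (Phih g v h (T v h)) \<and>
      finite_type_on (ball 0 R) (Phih g v h (T v h)) k' m' M'"
    using standing by blast
  obtain U where U: "cube 2 \<subseteq> U" "smooth_on U g"
    using real_analytic_on_imp_smooth_on[OF analytic] by blast
  show ?thesis
  proof (intro exI[of _ "2 * (fact CARD('n) * (4 * M') ^ CARD('n))"] allI impI ballI)
    fix v h and x :: "real^'n"
    assume vh: "admissible g v \<and> 0 < h \<and> h < h0" and x: "x \<in> ball 0 (R - 1)"
    have "cball x 1 \<subseteq> ball 0 R"
      using x by (simp add: cball_subset_ball_iff dist_commute)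
    moreover have "smooth_on (ball 0 R) (Phih g v h (T v h))"
      using T vh st[of v h] U by (intro smooth_on_Phih[OF U(2)]) auto
    moreover have "\<bar>iter_partial is (Phih g v h (T v h)) y\<bar> \<le> M'"
      if "y \<in> ball 0 R" "length is \<le> 4" for y "is"
      using st[of v h] vh that unfolding finite_type_on_def by auto
    ultimately show "(partial j (hessdet (Phih g v h (T v h))) x) ^ 2
        \<le> 2 * (fact CARD('n) * (4 * M') ^ CARD('n)) * hessdet (Phih g v h (T v h)) x"
      using st[of v h] vh by (intro partial_hessdet_sq_le[OF open_ball]) auto
  qed
qed

end
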